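(* Assume $I_\delta=0$. There exists a constant $C_L$, independent of $\delta$ (and of $c\in[c_0,c_1]$ and $R_0\in\mathcal{R}_c$), such that for all $\delta$-admissible $S_1,S_2\in\mathsf{X}$ and $G_\ell=\mathcal{G}(S_\ell)$, $\ell=1,2$, $$\|\mathcal{A}^2G_2-\mathcal{A}^2G_1\|_\infty+\|\mathcal{A}G_2-\mathcal{A}G_1\|_\infty+\delta\|G_2-G_1\|_\infty\le C_L\,\delta\,\|S_2'-S_1'\|_\infty .$$
   Context: $(\mathcal{A}F)(x)=\int_{x-1/2}^{x+1/2}F(s)\,ds$, $\Delta_1F(x)=F(x+1)-2F(x)+F(x-1)$, $a(k)=\frac{\sin(k/2)}{k/2}$, $\Psi_0'(r)=\mathrm{sgn}(r)$. Potentials: $(\Psi_\delta)_{\delta>0}$ is a family of $C^2$ functions such that $\Psi_\delta'(r)=\mathrm{sgn}(r)$ for $r\notin(-\delta,\delta)$, and $|\Psi_\delta'|\le C_\Psi$, $|\Psi_\delta''|\le C_\Psi/\delta$ on $\mathbb{R}$ with $C_\Psi$ independent of $\delta$; $I_\delta:=\frac12\int_{\mathbb{R}}(\Psi_\delta'-\Psi_0')\,dr$. Unperturbed waves (standing hypothesis, a known result): there are constants $0<c_0<1$ and $x_0,r_0,d_0,D_0>0$ such that for every $c\in[c_0,1)$ the equation $a(k)=c$ has exactly one positive solution $k_c$, and there is a two-parameter family $\mathcal{R}_c$ of functions $R_0\in W^{2,\infty}(\mathbb{R})$ solving $c^2R_0''=\Delta_1(R_0-\mathrm{sgn}(R_0))$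 with $R_0(0)=0$, given by $R_0=\bar R_0+\alpha(\cos(k_c\cdot)-1)+\beta\sin(k_c\cdot)$, $(\alpha,\beta)$ in an open neighbourhood $U_c$ of $0\in\mathbb{R}^2$, where $\bar R_0$ is a fixed member for which $\lim_{x\to+\infty}\bar R_0(x)$ exists and $\lim_{x\to-\infty}(\bar R_0(x)-\alpha_c^-(\cos(k_cx)-1)-\beta_c^-\sin(k_cx))$ exists for some constants $\alpha_c^-,\beta_c^-$. Every $R_0\in\mathcal{R}_c$ satisfies $\|R_0\|_\infty\le D_0(1-c^2)^{-1}$, $R_0(x)>r_0$ for $x>x_0$, $R_0(x)<-r_0$ for $x<-x_0$, $R_0'(x)>d_0$ for $|x|<x_0$. Setting: $c_1\in(c_0,1)$ fixed, $c\in[c_0,c_1]$, $R_0\in\mathcal{R}_c$ fixed. $\mathsf{X}:=\{S\in W^{2,\infty}(\mathbb{R}):S(0)=0,\ \lim_{x\to+\infty}S(x)\text{ exists}\}$. $\mathcal{G}(S)(x):=\Psi_\delta'(R_0(x)+S(x))-\Psi_0'(R_0(x))$. $S\in\mathsf{X}$ is called $\delta$-admissible if there exist $x_-<0<x_+$ with: $R_0(x_\pm)+S(x_\pm)=\pm\delta$; $R_0(x)+S(x)<-\delta$ for $x<x_-$; $R_0(x)+S(x)>\delta$ for $x>x_+$; and $\frac12R_0'(0)<R_0'(x)+S'(x)<2R_0'(0)$ for $x_-<x<x_+$. *)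

theory Defs
  imports "HOL-Analysis.Analysis"
begin

definition Aop :: "(real \<Rightarrow> real) \<Rightarrow> real \<Rightarrow> real" where
  "Aop F x = integral {x - 1/2 .. x + 1/2} F"

definition Delta1 :: "(real \<Rightarrow> real) \<Rightarrow> real \<Rightarrow> real" where
  "Delta1 F x = F (x + 1) - 2 * F x + F (x - 1)"

definition afun :: "real \<Rightarrow> real" where
  "afun k = sin (k / 2) / (k / 2)"

definition supn :: "(real \<Rightarrow> real) \<Rightarrow> real" where
  "supn f = (SUP x. \<bar>f x\<bar>)"

definition W2inf :: "(real \<Rightarrow> real) \<Rightarrow> bool" where
  "W2inf f \<longleftrightarrow> (\<forall>x. f differentiable at x) \<and> bounded (range f)
      \<and> bounded (range (deriv f)) \<and> (\<exists>L. L-lipschitz_on UNIV (deriv f))"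

definition Xsp :: "(real \<Rightarrow> real) set" where
  "Xsp = {S. W2inf S \<and> S 0 = 0 \<and> (\<exists>L. (S \<longlongrightarrow> L) at_top)}"

definition potential_family :: "(real \<Rightarrow> real \<Rightarrow> real) \<Rightarrow> real \<Rightarrow> bool" where
  "potential_family Psi CPsi \<longleftrightarrow> (\<forall>\<delta>>0.
      (\<forall>r. Psi \<delta> differentiable at r) \<and> (\<forall>r. deriv (Psi \<delta>) differentiable at r)
      \<and> continuous_on UNIV (deriv (deriv (Psi \<delta>)))
      \<and> (\<forall>r. \<bar>r\<bar> \<ge> \<delta> \<longrightarrow> deriv (Psi \<delta>) r = sgn r)
      \<and> (\<forall>r. \<bar>deriv (Psi \<delta>) r\<bar> \<le> CPsi)
      \<and> (\<forall>r. \<bar>deriv (deriv (Psi \<delta>)) r\<bar> \<le> CPsi / \<delta>))"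

text \<open>I_delta = 1/2 * integral over R of (Psi_delta' - Psi_0'), with Psi_0' = sgn.\<close>
definition Ifun :: "(real \<Rightarrow> real \<Rightarrow> real) \<Rightarrow> real \<Rightarrow> real" where
  "Ifun Psi \<delta> = 1/2 * integral UNIV (\<lambda>r. deriv (Psi \<delta>) r - sgn r)"

text \<open>Standing hypothesis on unperturbed waves. kc c is the unique positive solution
  of a(k) = c, Rbar c the fixed member and Rfam c the family R_c.\<close>
definition unperturbed_waves ::
  "real \<Rightarrow> real \<Rightarrow> real \<Rightarrow> real \<Rightarrow> real \<Rightarrow> (real \<Rightarrow> real) \<Rightarrow> (real \<Rightarrow> real \<Rightarrow> real)
     \<Rightarrow> (real \<Rightarrow> (real \<Rightarrow> real) set) \<Rightarrow> bool" where
  "unperturbed_waves c0 x0 r0 d0 D0 kc Rbar Rfam \<longleftrightarrow>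
     0 < c0 \<and> c0 < 1 \<and> x0 > 0 \<and> r0 > 0 \<and> d0 > 0 \<and> D0 > 0 \<and>
     (\<forall>c. c0 \<le> c \<and> c < 1 \<longrightarrow>
        kc c > 0 \<and> afun (kc c) = c \<and> (\<forall>k>0. afun k = c \<longrightarrow> k = kc c) \<and>
        (\<exists>U::(real \<times> real) set. open U \<and> (0, 0) \<in> U \<and>
           Rfam c = {(\<lambda>x. Rbar c x + \<alpha> * (cos (kc c * x) - 1) + \<beta> * sin (kc c * x)) | \<alpha> \<beta>. (\<alpha>, \<beta>) \<in> U}) \<and>
        (\<exists>L. (Rbar c \<longlongrightarrow> L) at_top) \<and>
        (\<exists>\<alpha>m \<beta>m L. ((\<lambda>x. Rbar c x - \<alpha>m * (cos (kc c * x) - 1) - \<beta>m * sin (kc c * x))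
                        \<longlongrightarrow> L) at_bot) \<and>
        (\<forall>R0\<in>Rfam c.
           W2inf R0 \<and> R0 0 = 0 \<and>
           (AE x in lborel. (deriv R0 has_real_derivative
                Delta1 (\<lambda>y. R0 y - sgn (R0 y)) x / c\<^sup>2) (at x)) \<and>
           (\<forall>x. \<bar>R0 x\<bar> \<le> D0 / (1 - c\<^sup>2)) \<and>
           (\<forall>x>x0. R0 x > r0) \<and> (\<forall>x. x < - x0 \<longrightarrow> R0 x < - r0) \<and>
           (\<forall>x. \<bar>x\<bar> < x0 \<longrightarrow> deriv R0 x > d0)))"

definition Gop :: "(real \<Rightarrow> real \<Rightarrow> real) \<Rightarrow> real \<Rightarrow> (real \<Rightarrow> real) \<Rightarrow> (real \<Rightarrow> real) \<Rightarrow> real \<Rightarrow> real" where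
  "Gop Psi \<delta> R0 S x = deriv (Psi \<delta>) (R0 x + S x) - sgn (R0 x)"

definition admissible :: "real \<Rightarrow> (real \<Rightarrow> real) \<Rightarrow> (real \<Rightarrow> real) \<Rightarrow> bool" where
  "admissible \<delta> R0 S \<longleftrightarrow> S \<in> Xsp \<and> (\<exists>xm xp. xm < 0 \<and> 0 < xp \<and>
      R0 xm + S xm = - \<delta> \<and> R0 xp + S xp = \<delta> \<and>
      (\<forall>x<xm. R0 x + S x < - \<delta>) \<and> (\<forall>x>xp. R0 x + S x > \<delta>) \<and>
      (\<forall>x. xm < x \<and> x < xp \<longrightarrow>
          deriv R0 0 / 2 < deriv R0 x + deriv S x \<and> deriv R0 x + deriv S x < 2 * deriv R0 0))"

end

theory Submission
  imports Defs
begin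

(* Write P = Psi_delta' and G_l = P(R0 + S_l) - sgn R0.  On each admissible
   S_l the sum R0 + S_l crosses the layer [-delta, delta] only on a window around 0 of
   width at most 4*delta/d0, because its slope there exceeds R0'(0)/2 > d0/2.  Outside that
   window P(R0 + S_l) = sgn(R0 + S_l) takes the same value for l = 1, 2, so the difference
   H = G_2 - G_1 is supported in [-2*delta/d0, 2*delta/d0].  Inside, the Lipschitz bound
   CPsi/delta for P and |S_2 - S_1|(t) <= ||S_2' - S_1'|| |t| give |H| <= (2*CPsi/d0) M
   with M = ||S_2' - S_1'||.  Averaging a function supported on an interval of length
   4*delta/d0 and bounded by B gives at most (4*delta/d0) B, and averaging again does not
   increase the sup norm. *)

subsection \<open>The averaging operator\<close>

definition locally_integrable :: "(real \<Rightarrow> real) \<Rightarrow> bool" where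
  "locally_integrable F \<longleftrightarrow> (\<forall>u v. F integrable_on {u..v})"

lemma continuous_imp_locally_integrable:
  assumes "continuous_on UNIV F"
  shows "locally_integrable F"
  unfolding locally_integrable_def
  by (intro allI integrable_continuous_real continuous_on_subset[OF assms]) simp

text \<open>The sign of a continuous function is measurable and bounded, hence locally integrable;
  this covers the term sgn R0 in G.\<close>
lemma sgn_comp_locally_integrable:
  fixes R :: "real \<Rightarrow> real"
  assumes "continuous_on UNIV R"
  shows "locally_integrable (\<lambda>x. sgn (R x))"
  unfolding locally_integrable_def
proof (intro allI)
  fix u v :: real
  have "R \<in> borel_measurable (lebesgue_on {u..v})"
    by (rule continuous_imp_measurable_on_sets_lebesgue[OF continuous_on_subset[OF assms]]) simp_all
  then have meas: "(\<lambda>x. sgn (R x)) \<in> borel_measurable (lebesgue_on {u..v})"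
    by (rule measurable_compose[OF _ borel_measurable_sgn])
  show "(\<lambda>x. sgn (R x)) integrable_on {u..v}"
    by (rule measurable_bounded_by_integrable_imp_integrable_real[OF meas, where g="\<lambda>_. 1"])
       (auto simp: sgn_if)
qed

text \<open>A F is continuous for locally integrable F: it is a difference of two shifted
  indefinite integrals.  This makes A F itself locally integrable, so A can be iterated.\<close>
lemma Aop_continuous:
  assumes F: "locally_integrable F"
  shows "continuous_on UNIV (Aop F)"
proof (rule continuous_at_imp_continuous_on, intro ballI)
  fix x :: real
  define Phi where "Phi y = integral {x - 2..y} F" for y
  have Phi_cont: "continuous_on {x - 2..x + 2} Phi"
    unfolding Phi_def using F by (auto simp: locally_integrable_def
        intro: indefinite_integral_continuous_1)
  have shifted: "Aop F y = Phi (y + 1/2) - Phi (y - 1/2)" if "y \<in> {x - 1..x + 1}" for y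
  proof -
    have "integral {x - 2..y - 1/2} F + integral {y - 1/2..y + 1/2} F = integral {x - 2..y + 1/2} F"
      using that F by (intro Henstock_Kurzweil_Integration.integral_combine)
        (auto simp: locally_integrable_def)
    then show ?thesis unfolding Aop_def Phi_def by linarith
  qed
  have "continuous_on {x - 1..x + 1} (\<lambda>y. Phi (y + 1/2) - Phi (y - 1/2))"
    by (intro continuous_on_diff continuous_on_compose2[OF Phi_cont] continuous_intros) auto
  then have "continuous_on {x - 1..x + 1} (Aop F)"
    by (rule continuous_on_eq) (use shifted in \<open>simp del: atLeastAtMost_iff\<close>)
  then show "isCont (Aop F) x"
    by (rule continuous_on_interior) (simp add: interior_atLeastAtMost_real)
qed

lemma Aop_locally_integrable:
  "locally_integrable F \<Longrightarrow> locally_integrable (Aop F)"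
  by (rule continuous_imp_locally_integrable, rule Aop_continuous)

lemma Aop_diff:
  assumes "locally_integrable F" "locally_integrable G"
  shows "Aop G x - Aop F x = Aop (\<lambda>t. G t - F t) x"
  using assms unfolding Aop_def locally_integrable_def by (simp add: integral_diff)

text \<open>A averages over a window of length 1, so it does not increase the sup norm.\<close>
lemma Aop_bound:
  assumes F: "locally_integrable F" and B: "\<And>t. \<bar>F t\<bar> \<le> B"
  shows "\<bar>Aop F x\<bar> \<le> B"
proof -
  have B0: "0 \<le> B" using B[of 0] by (meson abs_ge_zero order_trans)
  have int: "(F has_integral Aop F x) (cbox (x - 1/2) (x + 1/2))"
    using F unfolding Aop_def locally_integrable_def by (simp add: has_integral_integral)
  have "norm (Aop F x) \<le> B * Henstock_Kurzweil_Integration.content (cbox (x - 1/2) (x + 1/2))"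
    by (rule has_integral_bound[OF B0 int]) (use B in auto)
  then show ?thesis by simp
qed

text \<open>If F vanishes outside [-r, r], only a piece of length at most 2r of the window
  contributes; this is where the factor delta in the estimate comes from.\<close>
lemma Aop_localized_bound:
  assumes F: "locally_integrable F" and supp: "\<And>t. r < \<bar>t\<bar> \<Longrightarrow> F t = 0"
    and B: "\<And>t. \<bar>F t\<bar> \<le> B" and r: "0 \<le> r"
  shows "\<bar>Aop F x\<bar> \<le> 2 * r * B"
proof -
  have B0: "0 \<le> B" using B[of 0] by (meson abs_ge_zero order_trans)
  define a b where "a = max (-r) (x - 1/2)" and "b = min r (x + 1/2)"
  have "Aop F x = integral {x - 1/2..x + 1/2} (\<lambda>t. if t \<in> {-r..r} then F t else 0)"
    unfolding Aop_def by (rule integral_cong) (auto intro!: supp)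
  also have "\<dots> = integral ({-r..r} \<inter> {x - 1/2..x + 1/2}) F"
    by (rule integral_restrict_Int)
  also have "{-r..r} \<inter> {x - 1/2..x + 1/2} = cbox a b"
    unfolding a_def b_def by auto
  finally have eq: "Aop F x = integral (cbox a b) F" .
  have int: "(F has_integral Aop F x) (cbox a b)"
    using F unfolding eq locally_integrable_def by (simp add: has_integral_integral)
  have "norm (Aop F x) \<le> B * Henstock_Kurzweil_Integration.content (cbox a b)"
    by (rule has_integral_bound[OF B0 int]) (use B in auto)
  also have "\<dots> \<le> B * (2 * r)"
    using B0 r unfolding a_def b_def by (intro mult_left_mono) auto
  finally show ?thesis by (simp add: mult_ac)
qed

subsection \<open>The sup norm\<close>

text \<open>The two directions relating supn to pointwise bounds; the first needs boundedness,
  since supn is a conditionally complete supremum.\<close>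
lemma abs_le_supn:
  assumes "bounded (range f)"
  shows "\<bar>f x\<bar> \<le> supn f"
  unfolding supn_def
proof (rule cSUP_upper)
  obtain B where "\<And>y. \<bar>f y\<bar> \<le> B" using assms unfolding bounded_iff by auto
  then show "bdd_above (range (\<lambda>y. \<bar>f y\<bar>))" by (meson bdd_aboveI2)
qed simp

lemma supn_le:
  "(\<And>x. \<bar>f x\<bar> \<le> B) \<Longrightarrow> supn f \<le> B"
  unfolding supn_def by (rule cSUP_least) auto

lemma abs_le_supn_deriv:
  fixes f :: "real \<Rightarrow> real"
  assumes d: "\<And>x. f differentiable at x" and b: "bounded (range (deriv f))" and f0: "f 0 = 0"
  shows "\<bar>f x\<bar> \<le> supn (deriv f) * \<bar>x\<bar>"
  using field_differentiable_bound[where S=UNIV and f=f and f'="deriv f"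
      and B="supn (deriv f)" and x=x and y=0] d abs_le_supn[OF b] f0
  by (simp add: DERIV_deriv_iff_real_differentiable)

subsection \<open>The potentials\<close>

text \<open>The constant CPsi bounds an absolute value, so it is nonnegative.\<close>
lemma potential_const_nonneg:
  "potential_family Psi CPsi \<Longrightarrow> 0 \<le> CPsi"
  unfolding potential_family_def by (meson abs_ge_zero order_trans zero_less_one)

lemma potential_lipschitz:
  assumes "potential_family Psi CPsi" and "\<delta> > 0"
  shows "\<bar>deriv (Psi \<delta>) a - deriv (Psi \<delta>) b\<bar> \<le> CPsi / \<delta> * \<bar>a - b\<bar>"
proof -
  have d: "deriv (Psi \<delta>) differentiable at r" and b: "\<bar>deriv (deriv (Psi \<delta>)) r\<bar> \<le> CPsi / \<delta>" for r
    using assms unfolding potential_family_def by auto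
  show ?thesis
    using field_differentiable_bound[where S=UNIV and f="deriv (Psi \<delta>)"
        and f'="deriv (deriv (Psi \<delta>))" and B="CPsi / \<delta>" and x=a and y=b] d b
    by (simp add: DERIV_deriv_iff_real_differentiable)
qed

text \<open>G(S) is locally integrable whenever R0 and S are differentiable: the first term is
  continuous, the second is the sign of a continuous function.\<close>
lemma Gop_locally_integrable:
  assumes pf: "potential_family Psi CPsi" and "\<delta> > 0"
    and R0: "\<And>x. R0 differentiable at x" and S: "\<And>x. S differentiable at x"
  shows "locally_integrable (Gop Psi \<delta> R0 S)"
proof -
  have P: "isCont (deriv (Psi \<delta>)) r" for r
    using pf \<open>\<delta> > 0\<close> unfolding potential_family_def
    by (meson differentiable_imp_continuous_within)
  have "isCont R0 x" "isCont S x" for x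
    using R0 S differentiable_imp_continuous_within by blast+
  then have "continuous_on UNIV (\<lambda>x. deriv (Psi \<delta>) (R0 x + S x))"
    by (intro continuous_at_imp_continuous_on ballI isCont_o2[OF _ P] continuous_intros)
  then have "locally_integrable (\<lambda>x. deriv (Psi \<delta>) (R0 x + S x))"
    by (rule continuous_imp_locally_integrable)
  moreover have "continuous_on UNIV R0"
    using R0 by (meson continuous_at_imp_continuous_on differentiable_imp_continuous_within)
  then have "locally_integrable (\<lambda>x. sgn (R0 x))"
    by (rule sgn_comp_locally_integrable)
  ultimately show ?thesis
    unfolding Gop_def locally_integrable_def by (simp add: integrable_diff)
qed

subsection \<open>Admissible perturbations\<close>

text \<open>An admissible R0 + S leaves the layer [-delta, delta] within distance 2*delta/d0
  of the origin, because its slope on the transition interval exceeds R0'(0)/2 > d0/2.\<close>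
lemma admissible_transition_width:
  fixes R0 S :: "real \<Rightarrow> real"
  assumes adm: "admissible \<delta> R0 S" and WR: "W2inf R0" and R00: "R0 0 = 0"
    and dR: "deriv R0 0 > d0" and d0: "d0 > 0"
  shows "\<And>x. 2 * \<delta> / d0 \<le> x \<Longrightarrow> R0 x + S x > \<delta>"
    and "\<And>x. x \<le> - (2 * \<delta> / d0) \<Longrightarrow> R0 x + S x < - \<delta>"
proof -
  have WS: "W2inf S" and S0: "S 0 = 0"
    using adm unfolding admissible_def Xsp_def by auto
  obtain xm xp where xm: "xm < 0" and xp: "0 < xp" and fm: "R0 xm + S xm = - \<delta>"
    and fp: "R0 xp + S xp = \<delta>" and left: "\<forall>x<xm. R0 x + S x < - \<delta>"
    and right: "\<forall>x>xp. R0 x + S x > \<delta>"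
    and slope: "\<And>x. xm < x \<Longrightarrow> x < xp \<Longrightarrow> deriv R0 0 / 2 < deriv R0 x + deriv S x"
    using adm unfolding admissible_def by blast
  have D: "((\<lambda>x. R0 x + S x) has_real_derivative (deriv R0 x + deriv S x)) (at x)" for x
    using WR WS unfolding W2inf_def
    by (auto intro!: derivative_intros simp: DERIV_deriv_iff_real_differentiable)
  obtain z where z: "0 < z" "z < xp" "R0 xp + S xp - (R0 0 + S 0) = xp * (deriv R0 z + deriv S z)"
    using MVT2[OF xp, of "\<lambda>x. R0 x + S x"] D by force
  have "xp * (d0 / 2) < xp * (deriv R0 z + deriv S z)"
    using slope[of z] z xm xp dR by (intro mult_strict_left_mono) auto
  then have "xp < 2 * \<delta> / d0"
    using z fp R00 S0 d0 by (simp add: field_simps)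
  then show "\<And>x. 2 * \<delta> / d0 \<le> x \<Longrightarrow> R0 x + S x > \<delta>"
    using right less_le_trans by blast
  obtain w where w: "xm < w" "w < 0" "R0 0 + S 0 - (R0 xm + S xm) = (0 - xm) * (deriv R0 w + deriv S w)"
    using MVT2[OF xm, of "\<lambda>x. R0 x + S x"] D by force
  have "(- xm) * (d0 / 2) < (- xm) * (deriv R0 w + deriv S w)"
    using slope[of w] w xm xp dR by (intro mult_strict_left_mono) auto
  then have "- (2 * \<delta> / d0) < xm"
    using w fm R00 S0 d0 by (simp add: field_simps)
  then show "\<And>x. x \<le> - (2 * \<delta> / d0) \<Longrightarrow> R0 x + S x < - \<delta>"
    using left le_less_trans by blast
qed

text \<open>The difference G(S2) - G(S1) is supported in [-2*delta/d0, 2*delta/d0] and bounded by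
  (2*CPsi/d0) ||S2' - S1'||: outside the window both arguments of Psi_delta' lie beyond the
  same end of the layer, inside it the Lipschitz bound of Psi_delta' is compensated by the
  size 2*delta/d0 of the window.\<close>
lemma Gop_difference_localized:
  fixes R0 S1 S2 :: "real \<Rightarrow> real"
  assumes pf: "potential_family Psi CPsi" and dl: "\<delta> > 0"
    and a1: "admissible \<delta> R0 S1" and a2: "admissible \<delta> R0 S2"
    and WR: "W2inf R0" and R00: "R0 0 = 0" and dR: "deriv R0 0 > d0" and d0: "d0 > 0"
  defines "H \<equiv> \<lambda>t. Gop Psi \<delta> R0 S2 t - Gop Psi \<delta> R0 S1 t"
    and "M \<equiv> supn (\<lambda>x. deriv S2 x - deriv S1 x)"
  shows "\<And>t. 2 * \<delta> / d0 < \<bar>t\<bar> \<Longrightarrow> H t = 0"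
    and "\<And>t. \<bar>H t\<bar> \<le> 2 * CPsi / d0 * M"
proof -
  define P where "P = deriv (Psi \<delta>)"
  have P_sgn: "P r = sgn r" if "\<delta> \<le> \<bar>r\<bar>" for r
    using pf dl that unfolding potential_family_def P_def by auto
  have P_pos: "P r = 1" if "\<delta> < r" for r
    using P_sgn[of r] that dl by simp
  have P_neg: "P r = - 1" if "r < - \<delta>" for r
    using P_sgn[of r] that dl by simp
  have H_eq: "H t = P (R0 t + S2 t) - P (R0 t + S1 t)" for t
    unfolding H_def Gop_def P_def by simp
  note out1 = admissible_transition_width[OF a1 WR R00 dR d0]
  note out2 = admissible_transition_width[OF a2 WR R00 dR d0]
  show vanish: "H t = 0" if "2 * \<delta> / d0 < \<bar>t\<bar>" for t
  proof (cases "t > 0")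
    case True
    then have "R0 t + S1 t > \<delta>" "R0 t + S2 t > \<delta>" using that out1(1) out2(1) by auto
    then show ?thesis unfolding H_eq by (simp add: P_pos)
  next
    case False
    then have "R0 t + S1 t < - \<delta>" "R0 t + S2 t < - \<delta>" using that out1(2) out2(2) by auto
    then show ?thesis unfolding H_eq by (simp add: P_neg)
  qed
  have W1: "W2inf S1" and W2: "W2inf S2" and S0: "S1 0 = 0" "S2 0 = 0"
    using a1 a2 unfolding admissible_def Xsp_def by auto
  then have d: "(\<lambda>x. S2 x - S1 x) differentiable at x" for x
    unfolding W2inf_def by auto
  have deriv_eq: "deriv (\<lambda>x. S2 x - S1 x) = (\<lambda>x. deriv S2 x - deriv S1 x)"
  proof
    fix x
    have "S1 differentiable at x" "S2 differentiable at x"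
      using W1 W2 unfolding W2inf_def by auto
    then show "deriv (\<lambda>x. S2 x - S1 x) x = deriv S2 x - deriv S1 x"
      by (intro DERIV_imp_deriv DERIV_diff) (simp_all add: DERIV_deriv_iff_real_differentiable)
  qed
  have "bounded (range (\<lambda>x. deriv S2 x - deriv S1 x))"
  proof -
    obtain B1 B2 where B1: "\<And>x. \<bar>deriv S1 x\<bar> \<le> B1" and B2: "\<And>x. \<bar>deriv S2 x\<bar> \<le> B2"
      using W1 W2 unfolding W2inf_def bounded_iff by auto
    have "\<bar>deriv S2 x - deriv S1 x\<bar> \<le> B1 + B2" for x
      using abs_triangle_ineq4[of "deriv S2 x" "deriv S1 x"] B1[of x] B2[of x] by linarith
    then show ?thesis unfolding bounded_iff by auto
  qed
  then have S_diff: "\<bar>S2 t - S1 t\<bar> \<le> M * \<bar>t\<bar>" for t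
    using abs_le_supn_deriv[of "\<lambda>x. S2 x - S1 x", OF d] S0
    unfolding M_def deriv_eq by simp
  have M0: "0 \<le> M" and CP: "0 \<le> CPsi"
    using S_diff[of 1] potential_const_nonneg[OF pf] by auto
  show "\<bar>H t\<bar> \<le> 2 * CPsi / d0 * M" for t
  proof (cases "2 * \<delta> / d0 < \<bar>t\<bar>")
    case True then show ?thesis using vanish CP M0 d0 by simp
  next
    case False
    have "\<bar>H t\<bar> \<le> CPsi / \<delta> * \<bar>S2 t - S1 t\<bar>"
      unfolding H_eq P_def using potential_lipschitz[OF pf dl, of "R0 t + S2 t" "R0 t + S1 t"]
      by simp
    also have "\<dots> \<le> CPsi / \<delta> * (M * (2 * \<delta> / d0))"
    proof (rule mult_left_mono)
      have "M * \<bar>t\<bar> \<le> M * (2 * \<delta> / d0)"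
        using False M0 by (intro mult_left_mono) auto
      then show "\<bar>S2 t - S1 t\<bar> \<le> M * (2 * \<delta> / d0)"
        using S_diff[of t] by linarith
    qed (use CP dl in simp)
    also have "\<dots> = 2 * CPsi / d0 * M" using dl by (simp add: field_simps)
    finally show ?thesis .
  qed
qed

subsection \<open>The estimate for a fixed wave\<close>

text \<open>For a fixed wave R0 with R0'(0) > d0 the three sup norms are bounded by
  (4*delta/d0 + 4*delta/d0 + delta) (2*CPsi/d0) ||S2' - S1'||: averaging the localized
  difference H = G(S2) - G(S1) once gains the factor 4*delta/d0, averaging a second time
  costs nothing.\<close>
lemma Gop_difference_estimate:
  fixes R0 S1 S2 :: "real \<Rightarrow> real"
  assumes pf: "potential_family Psi CPsi" and dl: "\<delta> > 0"
    and a1: "admissible \<delta> R0 S1" and a2: "admissible \<delta> R0 S2"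
    and WR: "W2inf R0" and R00: "R0 0 = 0" and dR: "deriv R0 0 > d0" and d0: "d0 > 0"
  shows "supn (\<lambda>x. Aop (Aop (Gop Psi \<delta> R0 S2)) x - Aop (Aop (Gop Psi \<delta> R0 S1)) x)
           + supn (\<lambda>x. Aop (Gop Psi \<delta> R0 S2) x - Aop (Gop Psi \<delta> R0 S1) x)
           + \<delta> * supn (\<lambda>x. Gop Psi \<delta> R0 S2 x - Gop Psi \<delta> R0 S1 x)
         \<le> (8 / d0 + 1) * (2 * CPsi / d0) * \<delta> * supn (\<lambda>x. deriv S2 x - deriv S1 x)"
proof -
  define G1 G2 where "G1 = Gop Psi \<delta> R0 S1" and "G2 = Gop Psi \<delta> R0 S2"
  define H where "H t = G2 t - G1 t" for t
  define B where "B = 2 * CPsi / d0 * supn (\<lambda>x. deriv S2 x - deriv S1 x)"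
  define r where "r = 2 * \<delta> / d0"
  have H_supp: "\<And>t. r < \<bar>t\<bar> \<Longrightarrow> H t = 0" and H_bound: "\<And>t. \<bar>H t\<bar> \<le> B"
    using Gop_difference_localized[OF pf dl a1 a2 WR R00 dR d0]
    unfolding H_def G1_def G2_def B_def r_def by auto
  have r0: "0 \<le> r" using dl d0 unfolding r_def by simp
  have "\<And>x. R0 differentiable at x" "\<And>x. S1 differentiable at x" "\<And>x. S2 differentiable at x"
    using WR a1 a2 unfolding admissible_def Xsp_def W2inf_def by auto
  then have G1: "locally_integrable G1" and G2: "locally_integrable G2"
    unfolding G1_def G2_def using Gop_locally_integrable[OF pf dl] by blast+
  then have H: "locally_integrable H"
    unfolding H_def locally_integrable_def by (simp add: integrable_diff)
  have AH: "Aop G2 x - Aop G1 x = Aop H x" for x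
    unfolding H_def by (rule Aop_diff[OF G1 G2])
  have AAH: "Aop (Aop G2) x - Aop (Aop G1) x = Aop (Aop H) x" for x
    using Aop_diff[OF Aop_locally_integrable[OF G1] Aop_locally_integrable[OF G2]] AH by simp
  have AH_bound: "\<bar>Aop H x\<bar> \<le> 2 * r * B" for x
    by (rule Aop_localized_bound[OF H H_supp H_bound r0])
  have AAH_bound: "\<bar>Aop (Aop H) x\<bar> \<le> 2 * r * B" for x
    by (rule Aop_bound[OF Aop_locally_integrable[OF H] AH_bound])
  have "supn (\<lambda>x. Aop (Aop G2) x - Aop (Aop G1) x) \<le> 2 * r * B"
    unfolding AAH by (rule supn_le[OF AAH_bound])
  moreover have "supn (\<lambda>x. Aop G2 x - Aop G1 x) \<le> 2 * r * B"
    unfolding AH by (rule supn_le[OF AH_bound])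
  moreover have "\<delta> * supn (\<lambda>x. G2 x - G1 x) \<le> \<delta> * B"
    using supn_le[of H, OF H_bound] dl unfolding H_def by simp
  moreover have "2 * r * B + 2 * r * B + \<delta> * B
      = (8 / d0 + 1) * (2 * CPsi / d0) * \<delta> * supn (\<lambda>x. deriv S2 x - deriv S1 x)"
    unfolding r_def B_def using d0 by (simp add: field_simps)
  ultimately show ?thesis unfolding G1_def G2_def by linarith
qed

theorem lemma3p5:
  fixes Psi :: "real \<Rightarrow> real \<Rightarrow> real" and CPsi c0 c1 x0 r0 d0 D0 :: real
    and kc :: "real \<Rightarrow> real" and Rbar :: "real \<Rightarrow> real \<Rightarrow> real"
    and Rfam :: "real \<Rightarrow> (real \<Rightarrow> real) set"
  assumes "potential_family Psi CPsi"
    and "unperturbed_waves c0 x0 r0 d0 D0 kc Rbar Rfam"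
    and "c0 < c1" and "c1 < 1"
  shows "\<exists>CL. \<forall>\<delta>>0. \<forall>c\<in>{c0..c1}. \<forall>R0\<in>Rfam c. \<forall>S1 S2.
           Ifun Psi \<delta> = 0 \<longrightarrow> admissible \<delta> R0 S1 \<longrightarrow> admissible \<delta> R0 S2 \<longrightarrow>
           supn (\<lambda>x. Aop (Aop (Gop Psi \<delta> R0 S2)) x - Aop (Aop (Gop Psi \<delta> R0 S1)) x)
           + supn (\<lambda>x. Aop (Gop Psi \<delta> R0 S2) x - Aop (Gop Psi \<delta> R0 S1) x)
           + \<delta> * supn (\<lambda>x. Gop Psi \<delta> R0 S2 x - Gop Psi \<delta> R0 S1 x)
           \<le> CL * \<delta> * supn (\<lambda>x. deriv S2 x - deriv S1 x)"
proof (intro exI[of _ "(8 / d0 + 1) * (2 * CPsi / d0)"] allI impI ballI)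
  note waves = assms(2)[unfolded unperturbed_waves_def]
  fix \<delta> c R0 S1 S2
  assume dl: "(\<delta>::real) > 0" and c: "c \<in> {c0..c1}" and R0: "R0 \<in> Rfam c"
    and a1: "admissible \<delta> R0 S1" and a2: "admissible \<delta> R0 S2"
  have "c0 \<le> c \<and> c < 1" using c assms(4) by auto
  then have "W2inf R0" "R0 0 = 0" "deriv R0 0 > d0" "d0 > 0"
    using waves R0 by auto
  then show "supn (\<lambda>x. Aop (Aop (Gop Psi \<delta> R0 S2)) x - Aop (Aop (Gop Psi \<delta> R0 S1)) x)
           + supn (\<lambda>x. Aop (Gop Psi \<delta> R0 S2) x - Aop (Gop Psi \<delta> R0 S1) x)
           + \<delta> * supn (\<lambda>x. Gop Psi \<delta> R0 S2 x - Gop Psi \<delta> R0 S1 x)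
         \<le> (8 / d0 + 1) * (2 * CPsi / d0) * \<delta> * supn (\<lambda>x. deriv S2 x - deriv S1 x)"
    by (rule Gop_difference_estimate[OF assms(1) dl a1 a2])
qed

end
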